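(* Let $\Lambda$ be a row-finite $k$-graph with no sources, and let $\{t_\lambda\}_{\lambda\in\Lambda}$ be an irreducible representation of $C^*(\Lambda)$ with associated projection valued measure $P$. Suppose $\omega\in\Lambda^\infty$ is an atom, i.e. $P(\{\omega\})\neq0$. Then $\{t_\lambda\}_{\lambda\in\Lambda}$ is purely atomic and $P$ is supported on $\mathrm{Orbit}(\omega)$.
   Context: A $k$-graph ($k\ge1$) is a countable small category $\Lambda$ with a functor $d:\Lambda\to\mathbb N^k$ satisfying unique factorization: if $d(\lambda)=m+n$ there are unique $\mu,\nu$ with $\lambda=\mu\nu$, $d(\mu)=m$, $d(\nu)=n$. $\Lambda^0$ = vertices, $r,s$ = range, source, $v\Lambda^n=\{\lambda:d(\lambda)=n,r(\lambda)=v\}$; row-finite: each $v\Lambda^n$ finite; no sources: each $v\Lambda^n$ nonempty. Infinite paths are degree-preserving functors $x:\Omega_k\to\Lambda$, where $\Omega_k$ has objects $\mathbb N^k$, morphisms $(p,q)$, $p\le q$, $d(p,q)=q-p$; $\Lambda^\infty$ is their set; $\sigma^m(x)(p,q)=x(p+m,q+m)$. $\mathrm{Orbit}(\omega)=\{\gamma:\sigma^m(\gamma)=\sigma^\ell(\omega)\text{ for some }m,\ell\in\mathbb N^k\}$. Cylinder sets $Z(\lambda)=\{x:x(0,d(\lambda))=\lambda\}$ generate the Borel $\sigma$-algebra. A representation of $C^*(\Lambda)$ is a family of partial isometries $\{t_\lambda\}$ on a Hilbert space satisfying (CK1) $\{t_v\}$ mutually orthogonal projections, (CK2) $t_\lambda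 t_\eta=t_{\lambda\eta}$ when $s(\lambda)=r(\eta)$, (CK3) $t_\lambda^*t_\lambda=t_{s(\lambda)}$, (CK4) $t_v=\sum_{\lambda\in v\Lambda^n}t_\lambda t_\lambda^*$. Its projection valued measure $P$ on Borel sets of $\Lambda^\infty$ satisfies $P(Z(\lambda))=t_\lambda t_\lambda^*$. Purely atomic: there is a Borel $\Omega$ with $P(\Lambda^\infty\setminus\Omega)=0$, $P(\{\omega\})\ne0$ for all $\omega\in\Omega$, and $\sum_{\omega\in\Omega}P(\{\omega\})=\mathrm{Id}$ strongly. "Supported on $A$" means $P(\Lambda^\infty\setminus A)=0$. *)

theory Defs
  imports "HOL-Analysis.Analysis" "HOL-Library.Function_Algebras"
begin

text \<open>A complex Hilbert space: a complete real inner product space carrying a complex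
  scalar multiplication and a complex inner product (linear in the second variable,
  conjugate symmetric) whose real part is the real inner product.\<close>

class chilbert = real_inner + complete_space +
  fixes scaleC :: "complex \<Rightarrow> 'a \<Rightarrow> 'a"
    and cinner :: "'a \<Rightarrow> 'a \<Rightarrow> complex"
  assumes scaleC_add_right: "scaleC c (x + y) = scaleC c x + scaleC c y"
    and scaleC_add_left: "scaleC (b + c) x = scaleC b x + scaleC c x"
    and scaleC_scaleC: "scaleC b (scaleC c x) = scaleC (b * c) x"
    and scaleC_of_real: "scaleC (complex_of_real r) x = r *\<^sub>R x"
    and cinner_conj: "cinner x y = cnj (cinner y x)"
    and cinner_add_right: "cinner x (y + z) = cinner x y + cinner x z"
    and cinner_scaleC_right: "cinner x (scaleC c y) = c * cinner x y"
    and Re_cinner: "Re (cinner x y) = inner x y"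

definition bclin :: "('h::chilbert \<Rightarrow> 'h) \<Rightarrow> bool" where
  "bclin T \<longleftrightarrow> bounded_linear T \<and> (\<forall>c x. T (scaleC c x) = scaleC c (T x))"

definition cadj :: "('h::chilbert \<Rightarrow> 'h) \<Rightarrow> ('h \<Rightarrow> 'h)" where
  "cadj T = (THE S. \<forall>x y. cinner (T x) y = cinner x (S y))"

definition is_projection :: "('h::chilbert \<Rightarrow> 'h) \<Rightarrow> bool" where
  "is_projection P \<longleftrightarrow> bclin P \<and> P \<circ> P = P \<and> cadj P = P"

definition closed_csubspace :: "'h::chilbert set \<Rightarrow> bool" where
  "closed_csubspace M \<longleftrightarrow> 0 \<in> M \<and> (\<forall>x\<in>M. \<forall>y\<in>M. x + y \<in> M)
      \<and> (\<forall>c. \<forall>x\<in>M. scaleC c x \<in> M) \<and> closed M"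

text \<open>Degrees live in \<open>\<nat>\<^sup>k\<close>, encoded as functions \<open>nat \<Rightarrow> nat\<close> vanishing from index k on;
  addition, subtraction and order are pointwise.\<close>

definition Nk :: "nat \<Rightarrow> (nat \<Rightarrow> nat) set" where
  "Nk k = {n. \<forall>i\<ge>k. n i = 0}"

text \<open>A small category whose objects are identified with their identity morphisms:
  \<open>mors\<close> is the set of morphisms, \<open>rng\<close>/\<open>src\<close> give range/source (identity morphisms),
  \<open>cmp \<lambda> \<mu>\<close> is the composite \<open>\<lambda>\<mu>\<close> (defined when \<open>src \<lambda> = rng \<mu>\<close>), \<open>deg\<close> is the degree functor.\<close>

record 'a kgraph =
  mors :: "'a set"
  rng :: "'a \<Rightarrow> 'a"
  src :: "'a \<Rightarrow> 'a"
  cmp :: "'a \<Rightarrow> 'a \<Rightarrow> 'a"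
  deg :: "'a \<Rightarrow> nat \<Rightarrow> nat"

definition vertices :: "'a kgraph \<Rightarrow> 'a set" where
  "vertices G = {v \<in> mors G. rng G v = v}"

definition is_kgraph :: "nat \<Rightarrow> 'a kgraph \<Rightarrow> bool" where
  "is_kgraph k G \<longleftrightarrow> k \<ge> 1 \<and> countable (mors G) \<and>
     (\<forall>l\<in>mors G. rng G l \<in> mors G \<and> src G l \<in> mors G \<and>
        rng G (rng G l) = rng G l \<and> src G (rng G l) = rng G l \<and>
        rng G (src G l) = src G l \<and> src G (src G l) = src G l \<and>
        cmp G (rng G l) l = l \<and> cmp G l (src G l) = l \<and> deg G l \<in> Nk k) \<and>
     (\<forall>l\<in>mors G. \<forall>m\<in>mors G. src G l = rng G m \<longrightarrow>
        cmp G l m \<in> mors G \<and> rng G (cmp G l m) = rng G l \<and> src G (cmp G l m) = src G m \<and>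
        deg G (cmp G l m) = deg G l + deg G m) \<and>
     (\<forall>l\<in>mors G. \<forall>m\<in>mors G. \<forall>n\<in>mors G. src G l = rng G m \<longrightarrow> src G m = rng G n \<longrightarrow>
        cmp G (cmp G l m) n = cmp G l (cmp G m n)) \<and>
     (\<forall>l\<in>mors G. \<forall>m\<in>Nk k. \<forall>n\<in>Nk k. deg G l = m + n \<longrightarrow>
        (\<exists>!p. fst p \<in> mors G \<and> snd p \<in> mors G \<and> src G (fst p) = rng G (snd p) \<and>
              cmp G (fst p) (snd p) = l \<and> deg G (fst p) = m \<and> deg G (snd p) = n))"

definition row_finite :: "nat \<Rightarrow> 'a kgraph \<Rightarrow> bool" where
  "row_finite k G \<longleftrightarrow> (\<forall>v\<in>vertices G. \<forall>n\<in>Nk k.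
      finite {l \<in> mors G. rng G l = v \<and> deg G l = n})"

definition no_sources :: "nat \<Rightarrow> 'a kgraph \<Rightarrow> bool" where
  "no_sources k G \<longleftrightarrow> (\<forall>v\<in>vertices G. \<forall>n\<in>Nk k.
      {l \<in> mors G. rng G l = v \<and> deg G l = n} \<noteq> {})"

text \<open>An infinite path is a degree preserving functor \<open>x : \<Omega>\<^sub>k \<rightarrow> \<Lambda>\<close>, written as
  \<open>x p q\<close> for the image of the morphism \<open>(p,q)\<close>, \<open>p \<le> q\<close>; it is \<open>undefined\<close> off the
  morphisms of \<open>\<Omega>\<^sub>k\<close> (so that paths are determined by their values on \<open>\<Omega>\<^sub>k\<close>).\<close>

type_synonym 'a ipath = "(nat \<Rightarrow> nat) \<Rightarrow> (nat \<Rightarrow> nat) \<Rightarrow> 'a"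

definition Omega_mor :: "nat \<Rightarrow> (nat \<Rightarrow> nat) \<Rightarrow> (nat \<Rightarrow> nat) \<Rightarrow> bool" where
  "Omega_mor k p q \<longleftrightarrow> p \<in> Nk k \<and> q \<in> Nk k \<and> p \<le> q"

definition inf_paths :: "nat \<Rightarrow> 'a kgraph \<Rightarrow> 'a ipath set" where
  "inf_paths k G = {x.
     (\<forall>p q. Omega_mor k p q \<longrightarrow> x p q \<in> mors G \<and> deg G (x p q) = q - p \<and>
              rng G (x p q) = x p p \<and> src G (x p q) = x q q) \<and>
     (\<forall>p q t. Omega_mor k p q \<longrightarrow> Omega_mor k q t \<longrightarrow> cmp G (x p q) (x q t) = x p t) \<and>
     (\<forall>p q. \<not> Omega_mor k p q \<longrightarrow> x p q = undefined)}"

definition shift :: "nat \<Rightarrow> (nat \<Rightarrow> nat) \<Rightarrow> 'a ipath \<Rightarrow> 'a ipath" where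
  "shift k m x = (\<lambda>p q. if Omega_mor k p q then x (p + m) (q + m) else undefined)"

definition orbit :: "nat \<Rightarrow> 'a kgraph \<Rightarrow> 'a ipath \<Rightarrow> 'a ipath set" where
  "orbit k G w = {y \<in> inf_paths k G. \<exists>m\<in>Nk k. \<exists>l\<in>Nk k. shift k m y = shift k l w}"

definition cylinder :: "nat \<Rightarrow> 'a kgraph \<Rightarrow> 'a \<Rightarrow> 'a ipath set" where
  "cylinder k G l = {x \<in> inf_paths k G. x 0 (deg G l) = l}"

definition borel_paths :: "nat \<Rightarrow> 'a kgraph \<Rightarrow> 'a ipath set set" where
  "borel_paths k G = sigma_sets (inf_paths k G) (cylinder k G ` mors G)"

definition is_rep :: "nat \<Rightarrow> 'a kgraph \<Rightarrow> ('a \<Rightarrow> 'h::chilbert \<Rightarrow> 'h) \<Rightarrow> bool" where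
  "is_rep k G t \<longleftrightarrow>
     (\<forall>l\<in>mors G. bclin (t l) \<and> is_projection (cadj (t l) \<circ> t l)) \<and>
     (\<forall>v\<in>vertices G. is_projection (t v)) \<and>
     (\<forall>v\<in>vertices G. \<forall>w\<in>vertices G. v \<noteq> w \<longrightarrow> t v \<circ> t w = 0) \<and>
     (\<forall>l\<in>mors G. \<forall>m\<in>mors G. src G l = rng G m \<longrightarrow> t l \<circ> t m = t (cmp G l m)) \<and>
     (\<forall>l\<in>mors G. cadj (t l) \<circ> t l = t (src G l)) \<and>
     (\<forall>v\<in>vertices G. \<forall>n\<in>Nk k.
        t v = (\<Sum>l\<in>{l \<in> mors G. rng G l = v \<and> deg G l = n}. t l \<circ> cadj (t l)))"

definition irreducible_rep :: "'a kgraph \<Rightarrow> ('a \<Rightarrow> 'h::chilbert \<Rightarrow> 'h) \<Rightarrow> bool" where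
  "irreducible_rep G t \<longleftrightarrow> (\<forall>M. closed_csubspace M \<longrightarrow>
      (\<forall>l\<in>mors G. t l ` M \<subseteq> M \<and> cadj (t l) ` M \<subseteq> M) \<longrightarrow> M = {0} \<or> M = UNIV)"

definition is_pvm :: "'p set \<Rightarrow> 'p set set \<Rightarrow> ('p set \<Rightarrow> 'h::chilbert \<Rightarrow> 'h) \<Rightarrow> bool" where
  "is_pvm X S P \<longleftrightarrow>
     (\<forall>A\<in>S. is_projection (P A)) \<and> P {} = 0 \<and>
     (\<forall>A\<in>S. \<forall>B\<in>S. P (A \<inter> B) = P A \<circ> P B) \<and>
     (\<forall>A. range A \<subseteq> S \<longrightarrow> disjoint_family A \<longrightarrow> (\<forall>x. (\<lambda>n. P (A n) x) sums P (\<Union>n. A n) x))"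

definition rep_pvm :: "nat \<Rightarrow> 'a kgraph \<Rightarrow> ('a \<Rightarrow> 'h::chilbert \<Rightarrow> 'h)
    \<Rightarrow> ('a ipath set \<Rightarrow> 'h \<Rightarrow> 'h) \<Rightarrow> bool" where
  "rep_pvm k G t P \<longleftrightarrow> is_pvm (inf_paths k G) (borel_paths k G) P \<and>
     (\<forall>l\<in>mors G. P (cylinder k G l) = t l \<circ> cadj (t l))"

definition purely_atomic :: "nat \<Rightarrow> 'a kgraph \<Rightarrow> ('a ipath set \<Rightarrow> 'h::chilbert \<Rightarrow> 'h) \<Rightarrow> bool" where
  "purely_atomic k G P \<longleftrightarrow> (\<exists>\<Omega>\<in>borel_paths k G.
      P (inf_paths k G - \<Omega>) = 0 \<and> (\<forall>w\<in>\<Omega>. P {w} \<noteq> 0) \<and>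
      (\<forall>x. ((\<lambda>w. P {w} x) has_sum x) \<Omega>))"

definition supported_on :: "nat \<Rightarrow> 'a kgraph \<Rightarrow> ('a ipath set \<Rightarrow> 'h::chilbert \<Rightarrow> 'h) \<Rightarrow> 'a ipath set \<Rightarrow> bool" where
  "supported_on k G P A \<longleftrightarrow> P (inf_paths k G - A) = 0"

end

theory Submission
  imports Defs
begin

text \<open>
  The orbit O of the atom omega is countable, hence Borel, and P(O) commutes with every
  t_lambda. Indeed, O \<inter> Z(lambda) is the disjoint union of the fibres of sigma^d(lambda) over
  the points of O \<inter> Z(s(lambda)); each fibre is a decreasing intersection of cylinders
  Z(lambda mu), so the Cuntz-Krieger relations give
  t_lambda^* P(O \<inter> Z(lambda)) t_lambda = P(O \<inter> Z(s(lambda))), and multiplying by t_lambda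
  yields P(O) t_lambda = t_lambda P(O). By irreducibility the projection P(O) is 0 or the
  identity, and it is not 0 because it dominates the atom P{omega}. Hence P is supported on
  the countable set O, and countable additivity, in its unconditional form, writes every
  vector as the sum of its components in the ranges of the atoms P{gamma}, gamma in O.
  The adjoints t_lambda^* exist by the Riesz representation theorem, which follows from the
  existence of nearest points in closed convex sets.
\<close>

section \<open>Nearest points, the Riesz representation and adjoints\<close>

lemma parallelogram_law:
  fixes x y :: "'a::real_inner"
  shows "norm (x + y)^2 + norm (x - y)^2 = 2 * norm x ^2 + 2 * norm y ^2"
  by (simp add: power2_norm_eq_inner inner_add_left inner_add_right inner_diff_left
      inner_diff_right inner_commute)

lemma minimizing_sequence_Cauchy:
  fixes K :: "'a::real_inner set"
  assumes K: "convex K" and ks: "\<And>n. ks n \<in> K"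
    and lim: "(\<lambda>n. dist a (ks n)) \<longlonglongrightarrow> infdist a K"
  shows "Cauchy ks"
proof (rule metric_CauchyI)
  fix e :: real assume "e > 0"
  define d where "d = infdist a K"
  define g where "g n = 2 * (dist a (ks n)^2 - d^2)" for n
  have "g \<longlonglongrightarrow> 2 * (d^2 - d^2)"
    unfolding g_def d_def by (intro tendsto_intros lim)
  then have g_lim: "g \<longlonglongrightarrow> 0" by simp
  have "e^2 / 2 > 0" using \<open>e > 0\<close> by simp
  then obtain N where N: "\<forall>n\<ge>N. norm (g n - 0) < e^2 / 2"
    using g_lim unfolding LIMSEQ_iff by blast
  have ks_dist: "dist (ks m) (ks n)^2 \<le> g m + g n" for m n
  proof -
    have "(1/2) *\<^sub>R (ks m + ks n) \<in> K"
      using convexD[OF K ks ks, of "1/2" "1/2"] by (simp add: scaleR_add_right)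
    then have "d \<le> dist a ((1/2) *\<^sub>R (ks m + ks n))"
      unfolding d_def by (rule infdist_le)
    also have "\<dots> = norm ((1/2) *\<^sub>R ((a - ks m) + (a - ks n)))"
      by (metis dist_norm add_diff_add scaleR_half_double scaleR_right_diff_distrib)
    also have "\<dots> = norm ((a - ks m) + (a - ks n)) / 2"
      by simp
    finally have "(2 * d)^2 \<le> norm ((a - ks m) + (a - ks n))^2"
      using infdist_nonneg[of a K] by (intro power_mono) (auto simp: d_def)
    then show ?thesis
      using parallelogram_law[of "a - ks m" "a - ks n"]
      by (simp add: g_def dist_norm norm_minus_commute)
  qed
  have "dist (ks m) (ks n) < e" if "m \<ge> N" "n \<ge> N" for m n
  proof -
    have "g m < e^2 / 2" "g n < e^2 / 2" using N that by auto
    with ks_dist[of m n] have "dist (ks m) (ks n)^2 < e^2" by linarith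
    then show ?thesis using \<open>e > 0\<close> by (simp add: power_less_imp_less_base)
  qed
  then show "\<exists>N. \<forall>m\<ge>N. \<forall>n\<ge>N. dist (ks m) (ks n) < e" by blast
qed

lemma closed_convex_nearest_point_exists:
  fixes K :: "'a::{real_inner,complete_space} set"
  assumes K: "convex K" "closed K" and K_ne: "K \<noteq> {}"
  obtains p where "p \<in> K" "\<And>k. k \<in> K \<Longrightarrow> dist a p \<le> dist a k"
proof -
  define d where "d = infdist a K"
  have "\<exists>k\<in>K. dist a k < d + 1 / Suc n" for n
  proof -
    have "(INF k\<in>K. dist a k) < d + 1 / Suc n"
      using K_ne by (simp add: d_def infdist_notempty)
    moreover have "bdd_below (dist a ` K)" by (rule bdd_belowI[of _ 0]) auto
    ultimately show ?thesis using cINF_less_iff[OF K_ne] by blast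
  qed
  then obtain ks where ks: "\<And>n. ks n \<in> K" and ks_near: "\<And>n. dist a (ks n) < d + 1 / Suc n"
    by metis
  have lim: "(\<lambda>n. dist a (ks n)) \<longlonglongrightarrow> d"
  proof (rule tendsto_sandwich)
    show "\<forall>\<^sub>F n in sequentially. d \<le> dist a (ks n)"
      unfolding d_def by (intro always_eventually allI infdist_le ks)
    show "\<forall>\<^sub>F n in sequentially. dist a (ks n) \<le> d + 1 / Suc n"
      by (intro always_eventually allI less_imp_le ks_near)
    show "(\<lambda>n. d + 1 / real (Suc n)) \<longlonglongrightarrow> d"
      using tendsto_add[OF tendsto_const LIMSEQ_Suc[OF lim_inverse_n'[unfolded inverse_eq_divide]], of d]
      by simp
  qed simp
  then have "Cauchy ks"
    unfolding d_def by (rule minimizing_sequence_Cauchy[OF K(1) ks])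
  then obtain p where p: "ks \<longlonglongrightarrow> p"
    using convergent_eq_Cauchy by blast
  have "dist a p = d"
    using LIMSEQ_unique[OF tendsto_dist[OF tendsto_const p] lim] .
  show ?thesis
  proof (rule that)
    show "p \<in> K" using K(2) p ks closed_sequentially by blast
    show "dist a p \<le> dist a k" if "k \<in> K" for k
      using \<open>dist a p = d\<close> infdist_le[OF that] by (simp add: d_def)
  qed
qed

lemma nearest_point_orthogonal:
  fixes K :: "'a::real_inner set"
  assumes K: "subspace K" and p: "p \<in> K" and nearest: "\<And>k. k \<in> K \<Longrightarrow> dist a p \<le> dist a k"
    and k: "k \<in> K"
  shows "inner (a - p) k = 0"
proof (cases "k = 0")
  case False
  define u where "u = a - p"
  define s where "s = inner u k / (norm k)^2"
  have "p + s *\<^sub>R k \<in> K" using K p k by (simp add: subspace_add subspace_scale)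
  then have "norm u \<le> norm (u - s *\<^sub>R k)"
    using nearest by (force simp: u_def dist_norm algebra_simps)
  then have "norm u ^2 \<le> norm (u - s *\<^sub>R k) ^2" by (simp add: power_mono)
  also have "\<dots> = norm u ^2 - 2 * s * inner u k + s^2 * norm k ^2"
    by (simp only: power2_norm_eq_inner inner_diff_left inner_diff_right inner_scaleR_left
        inner_scaleR_right) (simp add: inner_commute algebra_simps power2_eq_square)
  also have "\<dots> = norm u ^2 - (inner u k)^2 / (norm k)^2"
    using False by (simp add: s_def power2_eq_square field_simps)
  finally have "(inner u k)^2 \<le> 0" using False by (simp add: divide_le_0_iff)
  then show ?thesis by (simp add: u_def)
qed simp

lemma riesz_representation:
  fixes f :: "'a::{real_inner,complete_space} \<Rightarrow> real"
  assumes "bounded_linear f"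
  obtains z where "\<And>x. f x = inner z x"
proof (cases "\<forall>x. f x = 0")
  case True
  then show ?thesis by (intro that[of 0]) simp
next
  case False
  interpret f: bounded_linear f by fact
  define K where "K = {x. f x = 0}"
  have "subspace K"
    using f.linear_axioms by (simp add: K_def linear_subspace_kernel)
  moreover have "closed K"
    unfolding K_def by (intro closed_Collect_eq f.continuous_on continuous_on_id continuous_on_const)
  ultimately have K: "subspace K" "closed K" by blast+
  obtain a where fa: "f a \<noteq> 0" using False by blast
  obtain p where p: "p \<in> K" and nearest: "\<And>k. k \<in> K \<Longrightarrow> dist a p \<le> dist a k"
    using closed_convex_nearest_point_exists[OF subspace_imp_convex[OF K(1)] K(2)] subspace_0[OF K(1)]
    by blast
  define u where "u = a - p"
  have fu: "f u = f a" using p by (simp add: u_def K_def f.diff)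
  show ?thesis
  proof (rule that)
    fix x
    have "x - (f x / f u) *\<^sub>R u \<in> K" using fa fu by (simp add: K_def f.diff f.scaleR)
    then have "inner u (x - (f x / f u) *\<^sub>R u) = 0"
      unfolding u_def using nearest_point_orthogonal[OF K(1) p] nearest by blast
    then have "inner u x = (f x / f u) * (norm u)^2"
      by (simp add: inner_diff_right power2_norm_eq_inner)
    moreover have "u \<noteq> 0" using fu fa f.zero by auto
    ultimately show "f x = inner ((f u / (norm u)^2) *\<^sub>R u) x"
      using fa fu by (simp add: field_simps)
  qed
qed

lemma Im_cinner: "Im (cinner a b) = inner (scaleC \<i> a) b"
proof -
  have "cinner (scaleC \<i> a) b = cnj (\<i> * cinner b a)"
    by (simp add: cinner_conj[of "scaleC \<i> a" b] cinner_scaleC_right)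
  also have "\<dots> = - \<i> * cinner a b" by (simp add: cinner_conj[of b a])
  finally show ?thesis by (simp add: Re_cinner[symmetric])
qed

lemma adjoint_exists:
  fixes T :: "'h::chilbert \<Rightarrow> 'h"
  assumes "bclin T"
  obtains S where "\<And>x y. cinner (T x) y = cinner x (S y)"
proof -
  have bl: "bounded_linear T" and T_scaleC: "\<And>c x. T (scaleC c x) = scaleC c (T x)"
    using assms by (auto simp: bclin_def)
  have "\<exists>z. \<forall>x. inner (T x) y = inner z x" for y
    using riesz_representation[OF bounded_linear_compose[OF bounded_linear_inner_left bl]]
    by metis
  then obtain S where S: "\<And>x y. inner (T x) y = inner (S y) x" by metis
  show ?thesis
  proof (rule that, rule complex_eqI)
    fix x y
    show "Re (cinner (T x) y) = Re (cinner x (S y))"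
      by (simp only: Re_cinner S) (rule inner_commute)
    show "Im (cinner (T x) y) = Im (cinner x (S y))"
      by (simp only: Im_cinner T_scaleC[symmetric] S) (rule inner_commute)
  qed
qed

lemma cadj_eqI:
  fixes T :: "'h::chilbert \<Rightarrow> 'h"
  assumes S: "\<And>x y. cinner (T x) y = cinner x (S y)"
  shows "cadj T = S"
  unfolding cadj_def
proof (rule the_equality)
  show "\<forall>x y. cinner (T x) y = cinner x (S y)" using S by blast
  fix S' assume S': "\<forall>x y. cinner (T x) y = cinner x (S' y)"
  show "S' = S"
  proof
    fix y
    have "inner x (S' y) = inner x (S y)" for x
      using S S' by (metis Re_cinner)
    then show "S' y = S y" using vector_eq_ldot by blast
  qed
qed

lemma cinner_cadj:
  fixes T :: "'h::chilbert \<Rightarrow> 'h"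
  assumes "bclin T"
  shows "cinner (T x) y = cinner x (cadj T y)"
proof -
  obtain S where S: "\<And>x y. cinner (T x) y = cinner x (S y)"
    using adjoint_exists[OF assms] by blast
  then show ?thesis using cadj_eqI[of T S] by simp
qed

lemma inner_cadj:
  fixes T :: "'h::chilbert \<Rightarrow> 'h"
  assumes "bclin T"
  shows "inner (T x) y = inner x (cadj T y)"
  by (metis Re_cinner cinner_cadj[OF assms])

lemma bounded_linear_cadj:
  fixes T :: "'h::chilbert \<Rightarrow> 'h"
  assumes "bclin T"
  shows "bounded_linear (cadj T)"
proof -
  obtain K where K: "K > 0" "\<And>x. norm (T x) \<le> norm x * K"
    using bounded_linear.pos_bounded assms unfolding bclin_def by blast
  note adj = inner_cadj[OF assms]
  show ?thesis
  proof (rule bounded_linear_intro)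
    fix a b
    show "cadj T (a + b) = cadj T a + cadj T b"
      using vector_eq_ldot by (metis adj inner_add_right)
  next
    fix r a
    show "cadj T (r *\<^sub>R a) = r *\<^sub>R cadj T a"
      using vector_eq_ldot by (metis adj inner_scaleR_right)
  next
    fix y
    have "norm (cadj T y)^2 = inner (T (cadj T y)) y"
      by (simp add: adj power2_norm_eq_inner)
    also have "\<dots> \<le> norm (T (cadj T y)) * norm y" by (rule norm_cauchy_schwarz)
    also have "\<dots> \<le> norm (cadj T y) * K * norm y" using K by (simp add: mult_right_mono)
    finally have "norm (cadj T y) * norm (cadj T y) \<le> norm (cadj T y) * (K * norm y)"
      by (simp add: power2_eq_square algebra_simps)
    then show "norm (cadj T y) \<le> norm y * K"
      using K by (cases "cadj T y = 0") (auto simp: mult_le_cancel_left mult.commute)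
  qed
qed

lemma cadj_comp:
  fixes A B :: "'h::chilbert \<Rightarrow> 'h"
  assumes "bclin A" "bclin B"
  shows "cadj (A \<circ> B) = cadj B \<circ> cadj A"
  by (rule cadj_eqI) (simp add: cinner_cadj assms)

lemma projection_apply_idem: "is_projection E \<Longrightarrow> E (E x) = E x"
  unfolding is_projection_def by (metis comp_apply)

lemma norm_projection_le:
  fixes E :: "'h::chilbert \<Rightarrow> 'h"
  assumes "is_projection E"
  shows "norm (E x) \<le> norm x"
proof -
  have "norm (E x)^2 = inner (E x) x"
    using inner_cadj[of E "E x" x] assms projection_apply_idem[OF assms]
    by (simp add: is_projection_def power2_norm_eq_inner)
  also have "\<dots> \<le> norm (E x) * norm x" by (rule norm_cauchy_schwarz)
  finally show ?thesis
    by (cases "E x = 0") (auto simp: power2_eq_square mult_le_cancel_left)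
qed

section \<open>Projection valued measures\<close>

locale proj_valued_measure = sigma_algebra X S for X :: "'p set" and S +
  fixes P :: "'p set \<Rightarrow> 'h::chilbert \<Rightarrow> 'h"
  assumes is_pvm: "is_pvm X S P"
begin

lemma pvm_projection: "A \<in> S \<Longrightarrow> is_projection (P A)"
  using is_pvm by (simp add: is_pvm_def)

lemma pvm_bounded_linear: "A \<in> S \<Longrightarrow> bounded_linear (P A)"
  using pvm_projection by (simp add: is_projection_def bclin_def)

lemma pvm_empty [simp]: "P {} x = 0"
  using is_pvm by (simp add: is_pvm_def)

lemma pvm_Int: "A \<in> S \<Longrightarrow> B \<in> S \<Longrightarrow> P (A \<inter> B) x = P A (P B x)"
  using is_pvm by (simp add: is_pvm_def)

lemma pvm_sums: "range A \<subseteq> S \<Longrightarrow> disjoint_family A \<Longrightarrow> (\<lambda>n. P (A n) x) sums P (\<Union>n. A n) x"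
  using is_pvm by (simp add: is_pvm_def)

lemma pvm_Un:
  assumes "A \<in> S" "B \<in> S" "A \<inter> B = {}"
  shows "P (A \<union> B) x = P A x + P B x"
proof -
  define F where "F n = (if n = 0 then A else if n = 1 then B else {})" for n :: nat
  have "(\<lambda>n. P (F n) x) sums P (\<Union>n. F n) x"
    using assms by (intro pvm_sums) (auto simp: F_def disjoint_family_on_def)
  moreover have "(\<Union>n. F n) = A \<union> B"
    by (auto simp: F_def split: if_splits)
  moreover have "(\<lambda>n. P (F n) x) sums (\<Sum>n\<in>{0,1}. P (F n) x)"
    by (rule sums_finite) (auto simp: F_def)
  ultimately show ?thesis by (simp add: F_def sums_unique2)
qed

lemma pvm_Diff:
  assumes "A \<in> S" "C \<in> S" "C \<subseteq> A"
  shows "P (A - C) x = P A x - P C x"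
proof -
  have "P A x = P (A - C) x + P C x"
    using pvm_Un[of "A - C" C x] assms by (simp add: Diff Un_absorb2 Int_commute)
  then show ?thesis by (simp add: eq_diff_eq)
qed

lemma pvm_disjoint_UN_finite:
  assumes "finite I" "B ` I \<subseteq> S" "disjoint_family_on B I"
  shows "P (\<Union>i\<in>I. B i) x = (\<Sum>i\<in>I. P (B i) x)"
  using assms
proof (induction I rule: finite_induct)
  case (insert i I)
  have "P (B i \<union> (\<Union>j\<in>I. B j)) x = P (B i) x + P (\<Union>j\<in>I. B j) x"
    using insert.prems insert.hyps
    by (intro pvm_Un) (auto simp: disjoint_family_on_def)
  with insert show ?case by (simp add: disjoint_family_on_insert)
qed simp

lemma pvm_tendsto_incseq:
  assumes "range A \<subseteq> S" "incseq A"
  shows "(\<lambda>n. P (A n) x) \<longlonglongrightarrow> P (\<Union>n. A n) x"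
proof -
  have "range (disjointed A) \<subseteq> S"
    using assms(1) by (rule range_disjointed_sets)
  then have "(\<lambda>n. P (disjointed A n) x) sums P (\<Union>n. A n) x"
    using pvm_sums disjoint_family_disjointed by (metis UN_disjointed_eq)
  then have "(\<lambda>n. \<Sum>i<Suc n. P (disjointed A i) x) \<longlonglongrightarrow> P (\<Union>n. A n) x"
    unfolding sums_def by (rule LIMSEQ_Suc)
  moreover have "(\<Sum>i<Suc n. P (disjointed A i) x) = P (A n) x" for n
  proof -
    have "(\<Sum>i<Suc n. P (disjointed A i) x) = P (\<Union>i<Suc n. disjointed A i) x"
      using \<open>range (disjointed A) \<subseteq> S\<close>
      by (intro pvm_disjoint_UN_finite[symmetric])
        (auto intro: disjoint_family_on_mono[OF subset_UNIV disjoint_family_disjointed])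
    also have "(\<Union>i<Suc n. disjointed A i) = A n"
      using finite_UN_disjointed_eq[of A "Suc n"] monoD[OF assms(2)]
      by (auto simp: atLeast0LessThan less_Suc_eq_le) blast
    finally show ?thesis .
  qed
  ultimately show ?thesis by simp
qed

lemma pvm_tendsto_decseq:
  assumes B: "range B \<subseteq> S" "decseq B"
  shows "(\<lambda>n. P (B n) x) \<longlonglongrightarrow> P (\<Inter>n. B n) x"
proof -
  have "(\<lambda>n. P (B 0 - B n) x) \<longlonglongrightarrow> P (\<Union>n. B 0 - B n) x"
    using B by (intro pvm_tendsto_incseq) (auto simp: incseq_def decseq_def)
  moreover have "P (B 0 - B n) x = P (B 0) x - P (B n) x" for n
    using B by (intro pvm_Diff) (auto simp: decseq_def)
  moreover have "P (\<Union>n. B 0 - B n) x = P (B 0) x - P (\<Inter>n. B n) x"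
    using B by (simp add: pvm_Diff countable_INT INT_lower image_subset_iff)
  ultimately have "(\<lambda>n. P (B 0) x - P (B n) x) \<longlonglongrightarrow> P (B 0) x - P (\<Inter>n. B n) x"
    by simp
  from tendsto_diff[OF tendsto_const[of "P (B 0) x"] this] show ?thesis by simp
qed

lemma pvm_tails_tendsto_0:
  assumes I: "countable I" "I \<noteq> {}" and B: "B ` I \<subseteq> S" and disj: "disjoint_family_on B I"
  shows "(\<lambda>n. P (\<Union>i\<in>I - from_nat_into I ` {..<n}. B i) x) \<longlonglongrightarrow> 0"
proof -
  define T where "T n = (\<Union>i\<in>I - from_nat_into I ` {..<n}. B i)" for n
  have "(\<lambda>n. P (T n) x) \<longlonglongrightarrow> P (\<Inter>n. T n) x"
  proof (rule pvm_tendsto_decseq)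
    show "range T \<subseteq> S"
      unfolding T_def using B countable_subset[OF _ I(1)] by (auto intro!: countable_UN')
    show "decseq T" by (auto simp: decseq_def T_def)
  qed
  moreover have "(\<Inter>n. T n) = {}"
  proof safe
    fix y assume y: "y \<in> (\<Inter>n. T n)"
    then obtain i where i: "i \<in> I" "y \<in> B i" by (auto simp: T_def)
    then obtain m where "from_nat_into I m = i" using from_nat_into_surj[OF I(1)] by blast
    moreover obtain j where j: "j \<in> I - from_nat_into I ` {..<Suc m}" "y \<in> B j"
      using y by (auto simp: T_def)
    ultimately have "B i \<inter> B j = {}"
      using disjoint_family_onD[OF disj i(1)] by blast
    then show "y \<in> {}" using i(2) j(2) by blast
  qed
  ultimately show ?thesis by (simp add: T_def)
qed

lemma pvm_has_sum_disjoint_UN: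
  assumes I: "countable I" and B: "B ` I \<subseteq> S" and disj: "disjoint_family_on B I"
  shows "((\<lambda>i. P (B i) x) has_sum P (\<Union>i\<in>I. B i) x) I"
proof (cases "I = {}")
  case False
  define U where "U J = (\<Union>i\<in>J. B i)" for J
  have U_S: "U J \<in> S" if "J \<subseteq> I" for J
    unfolding U_def using B that countable_subset[OF that I] by (intro countable_UN') auto
  have P_tail: "P (U I) x - (\<Sum>i\<in>Y. P (B i) x) = P (U (I - Y)) x"
    if "finite Y" "Y \<subseteq> I" for Y
  proof -
    have "U I = U Y \<union> U (I - Y)" using that by (auto simp: U_def)
    moreover have "U Y \<inter> U (I - Y) = {}"
      using disj that unfolding U_def disjoint_family_on_def by fast
    moreover have "P (U Y) x = (\<Sum>i\<in>Y. P (B i) x)"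
      unfolding U_def using that B disj
      by (intro pvm_disjoint_UN_finite) (auto intro: disjoint_family_on_mono)
    ultimately show ?thesis using that U_S by (simp add: pvm_Un)
  qed
  define F where "F n = from_nat_into I ` {..<n}" for n
  have F: "finite (F n)" "F n \<subseteq> I" for n
    using from_nat_into[OF False] by (auto simp: F_def)
  show ?thesis
    unfolding has_sum_def
  proof (rule tendstoI)
    fix e :: real assume "e > 0"
    then obtain n where n: "norm (P (U (I - F n)) x) < e"
      using pvm_tails_tendsto_0[OF I False B disj, of x]
      by (auto simp: LIMSEQ_iff U_def F_def)
    \<comment> \<open>The tail projections are nested, so enlarging F n to Y only shrinks the remainder.\<close>
    have near: "dist (\<Sum>i\<in>Y. P (B i) x) (P (U I) x) < e"
      if Y: "finite Y" "F n \<subseteq> Y" "Y \<subseteq> I" for Y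
    proof -
      have "U (I - Y) \<inter> U (I - F n) = U (I - Y)"
        using Y by (auto simp: U_def)
      then have "P (U (I - Y)) x = P (U (I - Y)) (P (U (I - F n)) x)"
        using U_S by (metis Diff_subset pvm_Int)
      then have "norm (P (U (I - Y)) x) \<le> norm (P (U (I - F n)) x)"
        using U_S[of "I - Y"] by (simp add: norm_projection_le pvm_projection)
      then show ?thesis
        using P_tail[OF Y(1,3)] n by (simp add: dist_norm norm_minus_commute)
    qed
    show "\<forall>\<^sub>F Y in finite_subsets_at_top I. dist (\<Sum>i\<in>Y. P (B i) x) (P (\<Union>i\<in>I. B i) x) < e"
      unfolding eventually_finite_subsets_at_top U_def[symmetric]
      by (intro exI[of _ "F n"]) (use F near in auto)
  qed
qed simp

lemma pvm_has_sum_singletons: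
  assumes "countable C" "\<And>w. w \<in> C \<Longrightarrow> {w} \<in> S"
  shows "((\<lambda>w. P {w} x) has_sum P C x) C"
  using pvm_has_sum_disjoint_UN[of C "\<lambda>w. {w}" x] assms
  by (simp add: disjoint_family_on_def image_subset_iff)

lemma pvm_purely_atomic_if_countable_support:
  assumes C: "countable C" "\<And>w. w \<in> C \<Longrightarrow> {w} \<in> S" and full: "P C = id"
  shows "\<exists>\<Omega>\<in>S. P (X - \<Omega>) = 0 \<and> (\<forall>w\<in>\<Omega>. P {w} \<noteq> 0) \<and> (\<forall>x. ((\<lambda>w. P {w} x) has_sum x) \<Omega>)"
proof (intro bexI conjI ballI allI)
  define \<Omega> where "\<Omega> = {w \<in> C. P {w} \<noteq> 0}"
  have \<Omega>: "\<Omega> \<subseteq> C" and null: "\<And>w x. w \<in> C - \<Omega> \<Longrightarrow> P {w} x = 0"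
    by (auto simp: \<Omega>_def)
  have "C \<in> S" by (rule countable[OF C(2,1)])
  show "\<Omega> \<in> S" by (rule countable) (use C \<Omega> countable_subset[OF \<Omega>] in auto)
  show "P {w} \<noteq> 0" if "w \<in> \<Omega>" for w using that by (simp add: \<Omega>_def)
  show "((\<lambda>w. P {w} x) has_sum x) \<Omega>" for x
  proof -
    have "((\<lambda>w. P {w} x) has_sum x) C"
      using pvm_has_sum_singletons[OF C, of x] full by simp
    then show ?thesis
      using has_sum_cong_neutral[of C \<Omega> "\<lambda>w. P {w} x" "\<lambda>w. P {w} x" x] \<Omega> null by blast
  qed
  show "P (X - \<Omega>) = 0"
  proof
    fix x
    have "P (X - \<Omega>) x = P ((X - \<Omega>) \<inter> C) x"
      using pvm_Int[OF compl_sets[OF \<open>\<Omega> \<in> S\<close>] \<open>C \<in> S\<close>] full by simp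
    also have "(X - \<Omega>) \<inter> C = C - \<Omega>"
      using sets_into_space[OF \<open>C \<in> S\<close>] by blast
    finally have "P (X - \<Omega>) x = P (C - \<Omega>) x" .
    moreover have "((\<lambda>w. P {w} x) has_sum P (C - \<Omega>) x) (C - \<Omega>)"
      using C by (intro pvm_has_sum_singletons) (auto intro: countable_subset)
    moreover have "((\<lambda>w. P {w} x) has_sum 0) (C - \<Omega>)"
      using null by (intro has_sum_0) blast
    ultimately show "P (X - \<Omega>) x = 0 x" using has_sum_unique by force
  qed
qed

lemma pvm_compl_eq_0:
  assumes "C \<in> S" "P C = id"
  shows "P (X - C) = 0"
proof
  fix x
  have "P (X - C) x = P ((X - C) \<inter> C) x"
    using pvm_Int[OF compl_sets[OF assms(1)] assms(1)] assms(2) by simp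
  also have "(X - C) \<inter> C = {}" by blast
  finally show "P (X - C) x = 0 x" by simp
qed

end

section \<open>Paths in k-graphs\<close>

definition diag_deg :: "nat \<Rightarrow> nat \<Rightarrow> nat \<Rightarrow> nat" where
  "diag_deg k n = (\<lambda>i. if i < k then n else 0)"

lemma Nk_add: "a \<in> Nk k \<Longrightarrow> b \<in> Nk k \<Longrightarrow> a + b \<in> Nk k"
  by (simp add: Nk_def)

lemma Nk_diff: "a \<in> Nk k \<Longrightarrow> a - b \<in> Nk k"
  by (simp add: Nk_def)

lemma zero_in_Nk: "0 \<in> Nk k"
  by (simp add: Nk_def)

lemma diag_deg_in_Nk: "diag_deg k n \<in> Nk k"
  by (simp add: Nk_def diag_deg_def)

lemma diag_deg_mono: "m \<le> n \<Longrightarrow> diag_deg k m \<le> diag_deg k n"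
  by (simp add: diag_deg_def le_fun_def)

lemma Nk_le_diag_deg:
  assumes "q \<in> Nk k"
  obtains n where "q \<le> diag_deg k n"
proof
  show "q \<le> diag_deg k (\<Sum>i<k. q i)"
    using assms by (auto simp: le_fun_def diag_deg_def Nk_def intro: member_le_sum)
qed

lemma countable_Nk: "countable (Nk k)"
proof (rule countable_image_inj_on)
  show "countable ((\<lambda>f. map f [0..<k]) ` Nk k)" by (rule countableI_type)
  show "inj_on (\<lambda>f. map f [0..<k]) (Nk k)"
    by (rule inj_onI) (auto simp: Nk_def fun_eq_iff not_less)
qed

lemma Omega_mor_shift: "Omega_mor k p q \<Longrightarrow> m \<in> Nk k \<Longrightarrow> Omega_mor k (p + m) (q + m)"
  by (auto simp: Omega_mor_def Nk_add le_fun_def)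

lemma Omega_mor_from_zero: "q \<in> Nk k \<Longrightarrow> Omega_mor k 0 q"
  by (simp add: Omega_mor_def zero_in_Nk)

locale kgraph =
  fixes k :: nat and G :: "'a kgraph"
  assumes is_kgraph: "is_kgraph k G"
begin

lemma rng_in_mors: "l \<in> mors G \<Longrightarrow> rng G l \<in> mors G"
  and src_in_mors: "l \<in> mors G \<Longrightarrow> src G l \<in> mors G"
  and rng_rng: "l \<in> mors G \<Longrightarrow> rng G (rng G l) = rng G l"
  and src_rng: "l \<in> mors G \<Longrightarrow> src G (rng G l) = rng G l"
  and rng_src: "l \<in> mors G \<Longrightarrow> rng G (src G l) = src G l"
  and cmp_rng_left: "l \<in> mors G \<Longrightarrow> cmp G (rng G l) l = l"
  and cmp_src_right: "l \<in> mors G \<Longrightarrow> cmp G l (src G l) = l"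
  and deg_in_Nk: "l \<in> mors G \<Longrightarrow> deg G l \<in> Nk k"
  using is_kgraph by (simp_all add: is_kgraph_def)

lemma cmp_in_mors: "l \<in> mors G \<Longrightarrow> m \<in> mors G \<Longrightarrow> src G l = rng G m \<Longrightarrow> cmp G l m \<in> mors G"
  and deg_cmp: "l \<in> mors G \<Longrightarrow> m \<in> mors G \<Longrightarrow> src G l = rng G m \<Longrightarrow>
      deg G (cmp G l m) = deg G l + deg G m"
  using is_kgraph by (simp_all add: is_kgraph_def)

lemma factorization_unique:
  assumes "a \<in> mors G" "b \<in> mors G" "a' \<in> mors G" "b' \<in> mors G"
    "src G a = rng G b" "src G a' = rng G b'" "cmp G a b = cmp G a' b'"
    "deg G a = deg G a'" "deg G b = deg G b'"
  shows "a = a' \<and> b = b'"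
proof -
  have "\<exists>!p. fst p \<in> mors G \<and> snd p \<in> mors G \<and> src G (fst p) = rng G (snd p) \<and>
      cmp G (fst p) (snd p) = cmp G a b \<and> deg G (fst p) = deg G a \<and> deg G (snd p) = deg G b"
    using is_kgraph cmp_in_mors[OF assms(1,2,5)] deg_in_Nk[OF assms(1)] deg_in_Nk[OF assms(2)]
      deg_cmp[OF assms(1,2,5)]
    unfolding is_kgraph_def by blast
  then have "(a, b) = (a', b')" using assms by (auto elim!: ex1E) metis+
  then show ?thesis by simp
qed

lemma deg_src: "l \<in> mors G \<Longrightarrow> deg G (src G l) = 0"
proof -
  assume l: "l \<in> mors G"
  then have v: "src G l \<in> mors G" "rng G (src G l) = src G l"
    by (simp_all add: src_in_mors rng_src)
  then have "deg G (src G l) = deg G (src G l) + deg G (src G l)"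
    using deg_cmp[of "src G l" "src G l"] cmp_rng_left[of "src G l"] src_rng[of "src G l"] by simp
  then show ?thesis by (simp add: fun_eq_iff)
qed

lemma path_mor:
  "x \<in> inf_paths k G \<Longrightarrow> Omega_mor k p q \<Longrightarrow>
    x p q \<in> mors G \<and> deg G (x p q) = q - p \<and> rng G (x p q) = x p p \<and> src G (x p q) = x q q"
  by (simp add: inf_paths_def)

lemma path_cmp:
  "x \<in> inf_paths k G \<Longrightarrow> Omega_mor k p q \<Longrightarrow> Omega_mor k q r \<Longrightarrow> cmp G (x p q) (x q r) = x p r"
  by (simp add: inf_paths_def)

lemma path_undefined: "x \<in> inf_paths k G \<Longrightarrow> \<not> Omega_mor k p q \<Longrightarrow> x p q = undefined"
  by (simp add: inf_paths_def)

lemma path_initial_in_mors: "x \<in> inf_paths k G \<Longrightarrow> q \<in> Nk k \<Longrightarrow> x 0 q \<in> mors G"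
  and deg_path_initial: "x \<in> inf_paths k G \<Longrightarrow> q \<in> Nk k \<Longrightarrow> deg G (x 0 q) = q"
  using path_mor[OF _ Omega_mor_from_zero] by (auto simp: fun_eq_iff)

lemma path_split_eq:
  assumes x: "x \<in> inf_paths k G" and y: "y \<in> inf_paths k G"
    and pq: "Omega_mor k p q" and qr: "Omega_mor k q r" and eq: "x p r = y p r"
  shows "x p q = y p q \<and> x q r = y q r"
  using path_mor[OF x pq] path_mor[OF x qr] path_mor[OF y pq] path_mor[OF y qr]
    path_cmp[OF x pq qr] path_cmp[OF y pq qr] eq
  by (intro factorization_unique) auto

lemma path_segment_eq:
  assumes x: "x \<in> inf_paths k G" and y: "y \<in> inf_paths k G"
    and pqr: "p \<in> Nk k" "q \<in> Nk k" "r \<in> Nk k" "p \<le> q" "q \<le> r"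
    and eq: "x 0 r = y 0 r"
  shows "x p q = y p q"
proof -
  have "x 0 q = y 0 q"
    using path_split_eq[OF x y Omega_mor_from_zero, of q r] pqr eq by (simp add: Omega_mor_def)
  then show ?thesis
    using path_split_eq[OF x y Omega_mor_from_zero, of p q] pqr by (simp add: Omega_mor_def)
qed

lemma path_eqI:
  assumes x: "x \<in> inf_paths k G" and y: "y \<in> inf_paths k G"
    and eq: "\<And>n. x 0 (diag_deg k n) = y 0 (diag_deg k n)"
  shows "x = y"
proof (intro ext)
  fix p q
  show "x p q = y p q"
  proof (cases "Omega_mor k p q")
    case True
    then have pq: "p \<in> Nk k" "q \<in> Nk k" "p \<le> q" by (auto simp: Omega_mor_def)
    obtain n where "q \<le> diag_deg k n" using Nk_le_diag_deg[OF pq(2)] .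
    then show ?thesis
      using path_segment_eq[OF x y pq(1,2) diag_deg_in_Nk pq(3)] eq by blast
  next
    case False
    then show ?thesis using path_undefined[OF x] path_undefined[OF y] by simp
  qed
qed

lemma shift_apply: "Omega_mor k p q \<Longrightarrow> shift k m x p q = x (p + m) (q + m)"
  by (simp add: shift_def)

lemma shift_in_paths:
  assumes x: "x \<in> inf_paths k G" and m: "m \<in> Nk k"
  shows "shift k m x \<in> inf_paths k G"
  unfolding inf_paths_def
proof (intro CollectI conjI allI impI)
  fix p q assume pq: "Omega_mor k p q"
  then have "Omega_mor k p p" "Omega_mor k q q" by (auto simp: Omega_mor_def)
  with path_mor[OF x Omega_mor_shift[OF pq m]]
  show "shift k m x p q \<in> mors G" "deg G (shift k m x p q) = q - p"
    "rng G (shift k m x p q) = shift k m x p p" "src G (shift k m x p q) = shift k m x q q"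
    by (simp_all add: shift_apply pq fun_eq_iff)
next
  fix p q t assume pq: "Omega_mor k p q" and qt: "Omega_mor k q t"
  then have "Omega_mor k p t" by (auto simp: Omega_mor_def)
  with path_cmp[OF x Omega_mor_shift[OF pq m] Omega_mor_shift[OF qt m]]
  show "cmp G (shift k m x p q) (shift k m x q t) = shift k m x p t"
    by (simp add: shift_apply pq qt)
qed (simp add: shift_def)

lemma shift_shift: "a \<in> Nk k \<Longrightarrow> shift k a (shift k b x) = shift k (a + b) x"
  by (auto simp: fun_eq_iff shift_def add.assoc dest: Omega_mor_shift)

lemma shift_apply_initial: "q \<in> Nk k \<Longrightarrow> shift k m x 0 q = x m (m + q)"
  by (simp add: shift_apply Omega_mor_from_zero add.commute)

lemma cylinder_subset_paths: "cylinder k G l \<subseteq> inf_paths k G"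
  by (auto simp: cylinder_def)

lemma cylinder_cmp:
  assumes l: "l \<in> mors G" and m: "m \<in> mors G" and lm: "src G l = rng G m"
  shows "cylinder k G (cmp G l m) = {y \<in> cylinder k G l. shift k (deg G l) y \<in> cylinder k G m}"
proof -
  let ?N = "deg G l" and ?M = "deg G m"
  have NM: "?N \<in> Nk k" "?M \<in> Nk k" using deg_in_Nk l m by auto
  then have N_NM: "Omega_mor k ?N (?N + ?M)" by (auto simp: Omega_mor_def Nk_add le_fun_def)
  have "y \<in> cylinder k G (cmp G l m) \<longleftrightarrow> y \<in> cylinder k G l \<and> shift k ?N y \<in> cylinder k G m"
    if y: "y \<in> inf_paths k G" for y
  proof -
    have y_split: "cmp G (y 0 ?N) (y ?N (?N + ?M)) = y 0 (?N + ?M)"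
      using path_cmp[OF y Omega_mor_from_zero[OF NM(1)] N_NM] .
    have "y 0 (?N + ?M) = cmp G l m \<longleftrightarrow> y 0 ?N = l \<and> y ?N (?N + ?M) = m"
    proof
      assume "y 0 (?N + ?M) = cmp G l m"
      then show "y 0 ?N = l \<and> y ?N (?N + ?M) = m"
        using path_mor[OF y Omega_mor_from_zero[OF NM(1)]] path_mor[OF y N_NM] y_split l m lm
        by (intro factorization_unique) auto
    qed (use y_split in auto)
    then show ?thesis
      using y shift_in_paths[OF y NM(1)]
      by (simp add: cylinder_def deg_cmp[OF l m lm] shift_apply_initial NM)
  qed
  then show ?thesis using cylinder_subset_paths by blast
qed

lemma initial_cylinders_decseq:
  assumes g: "g \<in> inf_paths k G"
  shows "decseq (\<lambda>n. cylinder k G (g 0 (diag_deg k n)))"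
proof (intro decseq_SucI subsetI)
  fix n y assume "y \<in> cylinder k G (g 0 (diag_deg k (Suc n)))"
  then have y: "y \<in> inf_paths k G" and "y 0 (diag_deg k (Suc n)) = g 0 (diag_deg k (Suc n))"
    by (auto simp: cylinder_def deg_path_initial[OF g diag_deg_in_Nk])
  moreover have "0 \<le> diag_deg k n" by (simp add: le_fun_def)
  ultimately have "y 0 (diag_deg k n) = g 0 (diag_deg k n)"
    using path_segment_eq[OF y g zero_in_Nk diag_deg_in_Nk diag_deg_in_Nk _ diag_deg_mono[of n "Suc n"]]
    by simp
  then show "y \<in> cylinder k G (g 0 (diag_deg k n))"
    using y by (simp add: cylinder_def deg_path_initial[OF g diag_deg_in_Nk])
qed

lemma singleton_eq_INT_cylinders:
  assumes g: "g \<in> inf_paths k G"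
  shows "{g} = (\<Inter>n. cylinder k G (g 0 (diag_deg k n)))"
  using path_eqI[OF _ g] g
  by (auto simp: cylinder_def deg_path_initial[OF g diag_deg_in_Nk])

lemma shift_fibre_eq_INT_cylinders:
  assumes l: "l \<in> mors G" and g: "g \<in> inf_paths k G" and g0: "g 0 0 = src G l"
  shows "{y \<in> cylinder k G l. shift k (deg G l) y = g}
    = (\<Inter>n. cylinder k G (cmp G l (g 0 (diag_deg k n))))"
proof -
  have "g 0 (diag_deg k n) \<in> mors G" "src G l = rng G (g 0 (diag_deg k n))" for n
    using path_mor[OF g Omega_mor_from_zero[OF diag_deg_in_Nk]] g0 by auto
  moreover have "shift k (deg G l) y \<in> inf_paths k G" if "y \<in> cylinder k G l" for y
    using that shift_in_paths deg_in_Nk[OF l] by (auto simp: cylinder_def)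
  ultimately show ?thesis
    using singleton_eq_INT_cylinders[OF g] by (auto simp: cylinder_cmp[OF l])
qed

lemma shift_in_cylinder_src:
  assumes l: "l \<in> mors G" and y: "y \<in> cylinder k G l"
  shows "shift k (deg G l) y \<in> cylinder k G (src G l)"
proof -
  have y: "y \<in> inf_paths k G" "y 0 (deg G l) = l" using y by (auto simp: cylinder_def)
  then have "shift k (deg G l) y 0 0 = src G l"
    using path_mor[OF y(1) Omega_mor_from_zero[OF deg_in_Nk[OF l]]]
    by (simp add: shift_apply_initial zero_in_Nk)
  then show ?thesis
    using shift_in_paths[OF y(1) deg_in_Nk[OF l]] by (simp add: cylinder_def deg_src[OF l])
qed

lemma shift_eq_imp_eq:
  assumes y: "y \<in> inf_paths k G" and y': "y' \<in> inf_paths k G" and m: "m \<in> Nk k"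
    and shift_eq: "shift k m y = shift k m y'" and initial_eq: "y 0 m = y' 0 m"
  shows "y = y'"
proof (rule path_eqI[OF y y'])
  fix n
  obtain N where "m \<le> diag_deg k N" using Nk_le_diag_deg[OF m] .
  define r where "r = diag_deg k (n + N)"
  have r: "r \<in> Nk k" "m \<le> r" "diag_deg k n \<le> r" "0 \<le> diag_deg k n"
    using order_trans[OF \<open>m \<le> diag_deg k N\<close> diag_deg_mono[of N "n + N" k]]
      diag_deg_mono[of n "n + N" k]
    by (simp_all add: r_def diag_deg_in_Nk le_fun_def)
  then have mr: "Omega_mor k m r" and r_m: "m + (r - m) = r"
    using m by (auto simp: Omega_mor_def le_fun_def fun_eq_iff)
  have "y m r = y' m r"
    using arg_cong[OF shift_eq, of "\<lambda>z. z 0 (r - m)"] Nk_diff[OF r(1)]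
    by (simp add: shift_apply_initial r_m)
  then have "y 0 r = y' 0 r"
    using path_cmp[OF y Omega_mor_from_zero[OF m] mr] path_cmp[OF y' Omega_mor_from_zero[OF m] mr]
      initial_eq by simp
  then show "y 0 (diag_deg k n) = y' 0 (diag_deg k n)"
    using path_segment_eq[OF y y' zero_in_Nk diag_deg_in_Nk r(1) r(4) r(3)] by blast
qed

lemma orbit_subset_paths: "orbit k G w \<subseteq> inf_paths k G"
  by (auto simp: orbit_def)

lemma self_in_orbit: "w \<in> inf_paths k G \<Longrightarrow> w \<in> orbit k G w"
  using zero_in_Nk by (auto simp: orbit_def)

lemma shift_in_orbit_iff:
  assumes y: "y \<in> inf_paths k G" and N: "N \<in> Nk k"
  shows "shift k N y \<in> orbit k G w \<longleftrightarrow> y \<in> orbit k G w"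
proof
  assume "shift k N y \<in> orbit k G w"
  then obtain m l where "m \<in> Nk k" "l \<in> Nk k" "shift k (m + N) y = shift k l w"
    by (auto simp: orbit_def shift_shift)
  then show "y \<in> orbit k G w" using y N Nk_add by (auto simp: orbit_def)
next
  assume "y \<in> orbit k G w"
  then obtain m l where ml: "m \<in> Nk k" "l \<in> Nk k" and "shift k m y = shift k l w"
    by (auto simp: orbit_def)
  then have "shift k m (shift k N y) = shift k (N + l) w"
    using shift_shift[OF N] shift_shift[OF ml(1)] by (metis add.commute)
  then show "shift k N y \<in> orbit k G w"
    using shift_in_paths[OF y N] ml Nk_add[OF N ml(2)] unfolding orbit_def by blast
qed

lemma orbit_Int_cylinder:
  assumes l: "l \<in> mors G"
  shows "orbit k G w \<inter> cylinder k G l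
    = {y \<in> cylinder k G l. shift k (deg G l) y \<in> orbit k G w \<inter> cylinder k G (src G l)}"
  using shift_in_orbit_iff[OF _ deg_in_Nk[OF l]] shift_in_cylinder_src[OF l] cylinder_subset_paths
  by blast

lemma countable_orbit: "countable (orbit k G w)"
proof -
  define Q where "Q = (\<lambda>(m, l, \<mu>). {y \<in> inf_paths k G. shift k m y = shift k l w \<and> y 0 m = \<mu>})"
  have orbit_sub: "orbit k G w \<subseteq> (\<Union>i\<in>Nk k \<times> Nk k \<times> mors G. Q i)"
  proof
    fix y assume "y \<in> orbit k G w"
    then obtain m l where y: "y \<in> inf_paths k G" "m \<in> Nk k" "l \<in> Nk k" "shift k m y = shift k l w"
      by (auto simp: orbit_def)
    then show "y \<in> (\<Union>i\<in>Nk k \<times> Nk k \<times> mors G. Q i)"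
      using path_initial_in_mors[OF y(1,2)] by (auto simp: Q_def intro!: bexI[of _ "(m, l, y 0 m)"])
  qed
  have countable_Q: "countable (Q i)" if "i \<in> Nk k \<times> Nk k \<times> mors G" for i
  proof (cases "Q i = {}")
    case False
    then obtain a where "a \<in> Q i" by blast
    then have "Q i \<subseteq> {a}"
      using that shift_eq_imp_eq by (auto simp: Q_def split: prod.splits)
    then show ?thesis by (rule countable_subset) simp
  qed simp
  have "countable (Nk k \<times> Nk k \<times> mors G)"
    using countable_Nk is_kgraph by (auto simp: is_kgraph_def)
  then show ?thesis
    using countable_subset[OF orbit_sub countable_UN[OF _ countable_Q]] by blast
qed

lemma sigma_algebra_borel_paths: "sigma_algebra (inf_paths k G) (borel_paths k G)"
  unfolding borel_paths_def by (rule sigma_algebra_sigma_sets) (auto simp: cylinder_def)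

lemma cylinder_in_borel: "l \<in> mors G \<Longrightarrow> cylinder k G l \<in> borel_paths k G"
  unfolding borel_paths_def by (rule sigma_sets.Basic) auto

lemma singleton_in_borel:
  assumes g: "g \<in> inf_paths k G"
  shows "{g} \<in> borel_paths k G"
proof -
  interpret sigma_algebra "inf_paths k G" "borel_paths k G"
    by (rule sigma_algebra_borel_paths)
  have "(\<Inter>n. cylinder k G (g 0 (diag_deg k n))) \<in> borel_paths k G"
    using cylinder_in_borel path_initial_in_mors[OF g diag_deg_in_Nk] by (intro countable_INT) auto
  then show ?thesis using singleton_eq_INT_cylinders[OF g] by simp
qed

end

section \<open>Representations and the orbit of an atom\<close>

lemma irreducible_rep_commuting_projection:
  fixes E :: "'h::chilbert \<Rightarrow> 'h"
  assumes irr: "irreducible_rep G t" and E: "is_projection E"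
    and t: "\<And>l. l \<in> mors G \<Longrightarrow> bclin (t l)"
    and comm: "\<And>l. l \<in> mors G \<Longrightarrow> E \<circ> t l = t l \<circ> E"
  shows "E = 0 \<or> E = id"
proof -
  define M where "M = {x. E x = x}"
  interpret E: bounded_linear E using E by (simp add: is_projection_def bclin_def)
  have "closed_csubspace M"
    unfolding closed_csubspace_def M_def
  proof (intro conjI ballI allI)
    show "closed {x. E x = x}"
      by (intro closed_Collect_eq E.continuous_on continuous_on_id)
  qed (use E in \<open>auto simp: E.add is_projection_def bclin_def\<close>)
  moreover have "t l ` M \<subseteq> M \<and> cadj (t l) ` M \<subseteq> M" if l: "l \<in> mors G" for l
  proof -
    have E_adj: "bclin E" "cadj E = E" using E by (simp_all add: is_projection_def)
    have "E \<circ> cadj (t l) = cadj (t l) \<circ> E"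
      using cadj_comp[OF E_adj(1) t[OF l]] cadj_comp[OF t[OF l] E_adj(1)] comm[OF l] E_adj(2)
      by simp
    then have "E (t l x) = t l (E x)" "E (cadj (t l) x) = cadj (t l) (E x)" for x
      using comm[OF l] by (metis comp_apply)+
    then show ?thesis by (auto simp: M_def)
  qed
  ultimately have "M = {0} \<or> M = UNIV"
    using irr by (simp add: irreducible_rep_def)
  then show ?thesis
    using projection_apply_idem[OF E] by (auto simp: M_def fun_eq_iff)
qed

locale kgraph_rep = kgraph k G for k :: nat and G :: "'a kgraph" +
  fixes t :: "'a \<Rightarrow> 'h::chilbert \<Rightarrow> 'h" and P :: "'a ipath set \<Rightarrow> 'h \<Rightarrow> 'h"
  assumes is_rep: "is_rep k G t" and rep_pvm: "rep_pvm k G t P"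
begin

sublocale pvm: proj_valued_measure "inf_paths k G" "borel_paths k G" P
proof -
  interpret sigma_algebra "inf_paths k G" "borel_paths k G"
    by (rule sigma_algebra_borel_paths)
  show "proj_valued_measure (inf_paths k G) (borel_paths k G) P"
    by unfold_locales (use rep_pvm in \<open>simp add: rep_pvm_def\<close>)
qed

lemma bclin_t: "l \<in> mors G \<Longrightarrow> bclin (t l)"
  and t_vertex_projection: "v \<in> vertices G \<Longrightarrow> is_projection (t v)"
  and t_cmp: "l \<in> mors G \<Longrightarrow> m \<in> mors G \<Longrightarrow> src G l = rng G m \<Longrightarrow> t l \<circ> t m = t (cmp G l m)"
  and cadj_t_t: "l \<in> mors G \<Longrightarrow> cadj (t l) \<circ> t l = t (src G l)"
  using is_rep by (simp_all add: is_rep_def)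

lemma pvm_cylinder: "l \<in> mors G \<Longrightarrow> P (cylinder k G l) = t l \<circ> cadj (t l)"
  using rep_pvm by (simp add: rep_pvm_def)

lemma bounded_linear_cadj_t: "l \<in> mors G \<Longrightarrow> bounded_linear (cadj (t l))"
  using bclin_t bounded_linear_cadj by blast

lemma src_in_vertices: "l \<in> mors G \<Longrightarrow> src G l \<in> vertices G"
  and rng_in_vertices: "l \<in> mors G \<Longrightarrow> rng G l \<in> vertices G"
  by (simp_all add: vertices_def src_in_mors rng_in_mors rng_src rng_rng)

lemma t_src: "l \<in> mors G \<Longrightarrow> t l \<circ> t (src G l) = t l"
  using t_cmp[of l "src G l"] by (simp add: src_in_mors rng_src cmp_src_right)

lemma cadj_t_rng: "l \<in> mors G \<Longrightarrow> cadj (t l) \<circ> t (rng G l) = cadj (t l)"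
proof -
  assume l: "l \<in> mors G"
  have "t (rng G l) \<circ> t l = t l"
    using t_cmp[of "rng G l" l] l by (simp add: rng_in_mors src_rng cmp_rng_left)
  then have "cadj (t l) \<circ> cadj (t (rng G l)) = cadj (t l)"
    using cadj_comp[OF bclin_t bclin_t, of "rng G l" l] l by (simp add: rng_in_mors)
  then show ?thesis
    using t_vertex_projection[OF rng_in_vertices[OF l]] by (simp add: is_projection_def)
qed

lemma pvm_cylinder_t: "l \<in> mors G \<Longrightarrow> P (cylinder k G l) (t l x) = t l x"
  using pvm_cylinder cadj_t_t t_src by (metis comp_apply)

lemma pvm_cylinder_vertex: "v \<in> vertices G \<Longrightarrow> P (cylinder k G v) = t v"
  using pvm_cylinder[of v] t_vertex_projection[of v]
  by (simp add: vertices_def is_projection_def)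

lemma cadj_pvm_cylinder_cmp:
  assumes l: "l \<in> mors G" and m: "m \<in> mors G" and lm: "src G l = rng G m"
  shows "cadj (t l) (P (cylinder k G (cmp G l m)) (t l x)) = P (cylinder k G m) x"
proof -
  have "cadj (t l) (P (cylinder k G (cmp G l m)) (t l x))
      = (cadj (t l) \<circ> t l) (t m (cadj (t m) ((cadj (t l) \<circ> t l) x)))"
    using t_cmp[OF l m lm] cadj_comp[OF bclin_t[OF l] bclin_t[OF m]]
    by (simp add: pvm_cylinder cmp_in_mors[OF l m lm] flip: t_cmp[OF l m lm])
  also have "\<dots> = t (rng G m) (t m (cadj (t m) (t (rng G m) x)))"
    by (simp add: cadj_t_t[OF l] lm)
  also have "\<dots> = t m (cadj (t m) x)"
    using t_cmp[of "rng G m" m] m cadj_t_rng[OF m]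
    by (simp add: rng_in_mors src_rng cmp_rng_left) (metis comp_apply)
  finally show ?thesis by (simp add: pvm_cylinder[OF m])
qed

lemma cadj_pvm_shift_fibre:
  assumes l: "l \<in> mors G" and g: "g \<in> inf_paths k G" and g0: "g 0 0 = src G l"
  shows "cadj (t l) (P {y \<in> cylinder k G l. shift k (deg G l) y = g} (t l x)) = P {g} x"
proof -
  define D where "D = (\<lambda>n. cylinder k G (g 0 (diag_deg k n)))"
  define C where "C = (\<lambda>n. cylinder k G (cmp G l (g 0 (diag_deg k n))))"
  have gn: "g 0 (diag_deg k n) \<in> mors G" "src G l = rng G (g 0 (diag_deg k n))" for n
    using path_mor[OF g Omega_mor_from_zero[OF diag_deg_in_Nk]] g0 by auto
  have D: "range D \<subseteq> borel_paths k G" "decseq D"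
    using cylinder_in_borel gn initial_cylinders_decseq[OF g] by (auto simp: D_def)
  have "range C \<subseteq> borel_paths k G"
    using cylinder_in_borel cmp_in_mors[OF l gn] by (auto simp: C_def)
  moreover have "decseq C"
    using D(2) by (auto simp: C_def D_def cylinder_cmp[OF l gn] decseq_def)
  ultimately have C: "range C \<subseteq> borel_paths k G" "decseq C" by blast+
  have "(\<lambda>n. cadj (t l) (P (C n) (t l x))) \<longlonglongrightarrow> cadj (t l) (P (\<Inter>n. C n) (t l x))"
    using bounded_linear_cadj_t[OF l] pvm.pvm_tendsto_decseq[OF C]
    by (rule bounded_linear.tendsto)
  moreover have "cadj (t l) (P (C n) (t l x)) = P (D n) x" for n
    unfolding C_def D_def by (rule cadj_pvm_cylinder_cmp[OF l gn])
  ultimately have "(\<lambda>n. P (D n) x) \<longlonglongrightarrow> cadj (t l) (P (\<Inter>n. C n) (t l x))"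
    by simp
  moreover have "(\<lambda>n. P (D n) x) \<longlonglongrightarrow> P {g} x"
    using pvm.pvm_tendsto_decseq[OF D] singleton_eq_INT_cylinders[OF g] by (simp add: D_def)
  ultimately have "cadj (t l) (P (\<Inter>n. C n) (t l x)) = P {g} x"
    by (rule LIMSEQ_unique)
  then show ?thesis
    by (simp only: shift_fibre_eq_INT_cylinders[OF l g g0] C_def)
qed

lemma cadj_pvm_shift_preimage:
  assumes l: "l \<in> mors G" and A: "countable A" "A \<subseteq> cylinder k G (src G l)"
  shows "cadj (t l) (P {y \<in> cylinder k G l. shift k (deg G l) y \<in> A} (t l x)) = P A x"
proof -
  let ?F = "{y \<in> cylinder k G l. shift k (deg G l) y \<in> A}"
  define B where "B g = {y \<in> cylinder k G l. shift k (deg G l) y = g}" for g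
  have A_paths: "g \<in> inf_paths k G" "g 0 0 = src G l" if "g \<in> A" for g
    using that A(2) by (auto simp: cylinder_def deg_src[OF l])
  have "B g \<in> borel_paths k G" if "g \<in> A" for g
  proof -
    have "cylinder k G (cmp G l (g 0 (diag_deg k n))) \<in> borel_paths k G" for n
      using path_mor[OF A_paths(1)[OF that] Omega_mor_from_zero[OF diag_deg_in_Nk]]
        A_paths(2)[OF that] l by (intro cylinder_in_borel cmp_in_mors) auto
    then have "(\<Inter>n. cylinder k G (cmp G l (g 0 (diag_deg k n)))) \<in> borel_paths k G"
      by blast
    then show ?thesis
      by (simp only: B_def shift_fibre_eq_INT_cylinders[OF l A_paths[OF that]])
  qed
  moreover have "disjoint_family_on B A" by (auto simp: B_def disjoint_family_on_def)
  moreover have "(\<Union>g\<in>A. B g) = ?F"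
    by (auto simp: B_def)
  ultimately have "((\<lambda>g. P (B g) (t l x)) has_sum P ?F (t l x)) A"
    using pvm.pvm_has_sum_disjoint_UN[OF A(1), of B "t l x"] by auto
  then have "((\<lambda>g. cadj (t l) (P (B g) (t l x))) has_sum cadj (t l) (P ?F (t l x))) A"
    by (rule has_sum_bounded_linear[OF bounded_linear_cadj_t[OF l]])
  moreover have "cadj (t l) (P (B g) (t l x)) = P {g} x" if "g \<in> A" for g
    unfolding B_def by (rule cadj_pvm_shift_fibre[OF l A_paths[OF that]])
  ultimately have "((\<lambda>g. P {g} x) has_sum cadj (t l) (P ?F (t l x))) A"
    using has_sum_cong by force
  moreover have "((\<lambda>g. P {g} x) has_sum P A x) A"
    using A_paths(1) singleton_in_borel by (intro pvm.pvm_has_sum_singletons A(1)) auto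
  ultimately show ?thesis by (rule has_sum_unique)
qed

lemma orbit_in_borel: "orbit k G w \<in> borel_paths k G"
  by (rule pvm.countable) (use countable_orbit orbit_subset_paths singleton_in_borel in auto)

lemma pvm_orbit_commutes:
  assumes l: "l \<in> mors G"
  shows "P (orbit k G w) \<circ> t l = t l \<circ> P (orbit k G w)"
proof
  fix x
  let ?O = "orbit k G w" and ?Z = "cylinder k G l" and ?Zs = "cylinder k G (src G l)"
  have borel: "?O \<in> borel_paths k G" "?Z \<in> borel_paths k G" "?Zs \<in> borel_paths k G"
    using orbit_in_borel cylinder_in_borel l src_in_mors by auto
  have key: "cadj (t l) (P (?O \<inter> ?Z) (t l x)) = P (?O \<inter> ?Zs) x"
    unfolding orbit_Int_cylinder[OF l]
    using countable_orbit l by (intro cadj_pvm_shift_preimage) auto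
  have "P ?O (t l x) = P (?O \<inter> ?Z) (t l x)"
    using borel pvm_cylinder_t[OF l] by (simp add: pvm.pvm_Int)
  also have "\<dots> = P (?Z \<inter> (?O \<inter> ?Z)) (t l x)"
    by (rule arg_cong[where f = "\<lambda>A. P A (t l x)"]) blast
  also have "\<dots> = P ?Z (P (?O \<inter> ?Z) (t l x))"
    using borel by (intro pvm.pvm_Int) auto
  also have "\<dots> = t l (P (?O \<inter> ?Zs) x)"
    using key by (simp add: pvm_cylinder[OF l])
  also have "\<dots> = t l (t (src G l) (P ?O x))"
    using borel pvm.pvm_Int[of ?Zs ?O] pvm_cylinder_vertex[OF src_in_vertices[OF l]]
    by (simp add: Int_commute)
  also have "\<dots> = t l (P ?O x)"
    using t_src[OF l] by (metis comp_apply)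
  finally show "(P ?O \<circ> t l) x = (t l \<circ> P ?O) x" by simp
qed

lemma pvm_orbit_eq_id:
  assumes irr: "irreducible_rep G t" and w: "w \<in> inf_paths k G" and atom: "P {w} \<noteq> 0"
  shows "P (orbit k G w) = id"
proof -
  have "P (orbit k G w) = 0 \<or> P (orbit k G w) = id"
    using irr pvm.pvm_projection[OF orbit_in_borel] bclin_t pvm_orbit_commutes
    by (rule irreducible_rep_commuting_projection)
  moreover have "P (orbit k G w) \<noteq> 0"
  proof
    assume "P (orbit k G w) = 0"
    moreover have "P {w} x = P {w} (P (orbit k G w) x)" for x
      using pvm.pvm_Int[OF singleton_in_borel[OF w] orbit_in_borel[of w]] self_in_orbit[OF w]
      by (simp add: Int_absorb2)
    ultimately have "P {w} x = 0" for x
      using linear_0[OF bounded_linear.linear[OF pvm.pvm_bounded_linear[OF singleton_in_borel[OF w]]]]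
      by simp
    then show False using atom by (auto simp: fun_eq_iff)
  qed
  ultimately show ?thesis by blast
qed

end

theorem proposition3p8:
  fixes k :: nat and G :: "'a kgraph" and t :: "'a \<Rightarrow> 'h::chilbert \<Rightarrow> 'h"
    and P :: "'a ipath set \<Rightarrow> 'h \<Rightarrow> 'h" and \<omega> :: "'a ipath"
  assumes "is_kgraph k G" and "row_finite k G" and "no_sources k G"
    and "is_rep k G t" and "irreducible_rep G t"
    and "rep_pvm k G t P"
    and "\<omega> \<in> inf_paths k G" and "P {\<omega>} \<noteq> 0"
  shows "purely_atomic k G P \<and> supported_on k G P (orbit k G \<omega>)"
proof -
  interpret kgraph_rep k G t P
    using assms by unfold_locales
  have full: "P (orbit k G \<omega>) = id"
    using assms by (intro pvm_orbit_eq_id)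
  show ?thesis
    unfolding purely_atomic_def supported_on_def
    using pvm.pvm_purely_atomic_if_countable_support[OF countable_orbit _ full]
      singleton_in_borel orbit_subset_paths pvm.pvm_compl_eq_0[OF orbit_in_borel full]
    by blast
qed

end
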